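(* Let $h>0$, assume $g$ satisfies (H), fix $c>0$, and let $\phi,\psi$ be two wavefront profiles of (1) with the same velocity $c$. If there is a finite $T$ such that $\phi(t)<\psi(t)$ for all $t<T$, then $\phi(t)<\psi(t)$ for all $t\in\mathbb{R}$.
   Context: Hypothesis (H): $g:\mathbb{R}_+\to\mathbb{R}_+$ is continuous and strictly increasing; $g(x)=x$ has exactly two nonnegative solutions $0$ and $\kappa>0$; $g$ is differentiable at $0,\kappa$ with $g'(0)>1$, $g'(\kappa)<1$; $g$ is $C^1$ near $\kappa$; and $|g(u)/u-g'(0)|\le Cu^\theta$ for $u\in(0,\delta]$ for some $C>0,\theta\in(0,1],\delta>0$. A wavefront profile with velocity $c$ is a $C^2$, positive, bounded, monotone function $\phi:\mathbb{R}\to\mathbb{R}$ with $\phi(-\infty)=0$, $\phi(+\infty)=\kappa$ and $\phi''(s)-c\phi'(s)-\phi(s)+g(\phi(s-ch))=0$ for all $s\in\mathbb{R}$ (so that $\phi(\nu\cdot x+ct)$ solves $u_t=\Delta u-u+g(u(t-h,x))$). *)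

theory Defs
  imports "HOL-Analysis.Analysis"
begin

definition hypH :: "(real \<Rightarrow> real) \<Rightarrow> real \<Rightarrow> bool" where
  "hypH g \<kappa> \<longleftrightarrow>
     (\<forall>x\<ge>0. g x \<ge> 0) \<and>
     continuous_on {0..} g \<and>
     strict_mono_on {0..} g \<and>
     \<kappa> > 0 \<and>
     {x. x \<ge> 0 \<and> g x = x} = {0, \<kappa>} \<and>
     (\<exists>g0 gk. (g has_real_derivative g0) (at 0 within {0..}) \<and> g0 > 1 \<and>
        (g has_real_derivative gk) (at \<kappa>) \<and> gk < 1 \<and>
        (\<exists>C \<theta> \<delta>. C > 0 \<and> 0 < \<theta> \<and> \<theta> \<le> 1 \<and> \<delta> > 0 \<and>
           (\<forall>u. 0 < u \<and> u \<le> \<delta> \<longrightarrow> \<bar>g u / u - g0\<bar> \<le> C * u powr \<theta>))) \<and>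
     (\<exists>\<epsilon>>0. \<exists>g'. (\<forall>x\<in>ball \<kappa> \<epsilon>. (g has_real_derivative g' x) (at x)) \<and>
        continuous_on (ball \<kappa> \<epsilon>) g')"

text \<open>Wavefront profile with velocity c for u_t = Delta u - u + g(u(t-h,x)).\<close>
definition wavefront :: "(real \<Rightarrow> real) \<Rightarrow> real \<Rightarrow> real \<Rightarrow> real \<Rightarrow> (real \<Rightarrow> real) \<Rightarrow> bool" where
  "wavefront g \<kappa> h c \<phi> \<longleftrightarrow>
     (\<exists>\<phi>1 \<phi>2. (\<forall>s. (\<phi> has_real_derivative \<phi>1 s) (at s)) \<and>
              (\<forall>s. (\<phi>1 has_real_derivative \<phi>2 s) (at s)) \<and>
              continuous_on UNIV \<phi>2 \<and>
              (\<forall>s. \<phi>2 s - c * \<phi>1 s - \<phi> s + g (\<phi> (s - c * h)) = 0)) \<and>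
     (\<forall>s. \<phi> s > 0) \<and>
     bounded (range \<phi>) \<and>
     mono \<phi> \<and>
     (\<phi> \<longlongrightarrow> 0) at_bot \<and>
     (\<phi> \<longlongrightarrow> \<kappa>) at_top"

end

theory Submission
  imports Defs
begin

(* Let phi, psi be wavefronts with the same velocity c and phi < psi on (-infinity, T).
   We use the sliding method on the shifted differences w_a(t) = psi(t + a) - phi(t):

   1. At a global minimum of w_a the maximum principle and the two profile equations
      give  g(psi(s - c h + a)) - g(phi(s - c h)) <= w_a(s)  (shifted_difference_at_min).
   2. Near +infinity g contracts below kappa (g'(kappa) < 1), so w_a >= 0 on a left
      half-line (-infinity, T0] propagates to all of R (comparison_from_left).
   3. If w_a >= 0 everywhere, a zero of w_a propagates backwards by steps of c h
      because g is injective; it would reach (-infinity, T), so w_a > 0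
      (strict_comparison).
   4. The set of admissible shifts {a >= 0. w_a >= 0} is nonempty and closed, and
      every positive element can be decreased (compactness of a window [T, T']),
      so 0 is admissible; steps 3 and 4 give phi < psi. *)

lemma second_order_min:
  fixes f f' f'' :: "real \<Rightarrow> real"
  assumes f': "\<And>s. (f has_real_derivative f' s) (at s)"
    and f'': "\<And>s. (f' has_real_derivative f'' s) (at s)"
    and min: "\<And>y. f x \<le> f y"
  shows "f' x = 0" and "0 \<le> f'' x"
proof -
  show crit: "f' x = 0"
    using DERIV_local_min[OF f' zero_less_one] min by blast
  show "0 \<le> f'' x"
  proof (rule ccontr)
    assume "\<not> 0 \<le> f'' x"
    then have "f'' x < 0" by simp
    from DERIV_neg_dec_right[OF f'' this] obtain d
      where d: "0 < d" and dec_step: "\<forall>k>0. k < d \<longrightarrow> f' (x + k) < f' x"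
      by blast
    have dec: "f' (x + k) < 0" if "0 < k" "k < d" for k
      using dec_step that crit by simp
    have "x < x + d/2" using d by simp
    then obtain z where z: "x < z" "z < x + d/2" and mvt: "f (x + d/2) - f x = (d/2) * f' z"
      using MVT2[of x "x + d/2" f f'] f' by auto
    have "f' z < 0" using dec[of "z - x"] z by simp
    then have "(d/2) * f' z < 0" using d by (simp add: mult_pos_neg)
    then have "f (x + d/2) < f x" using mvt by linarith
    then show False using min[of "x + d/2"] by simp
  qed
qed

(* This is how the delay c*h
   propagates a touching point all the way to -infinity. *)
lemma shift_invariant_set_unbounded_below:
  fixes S :: "real set" and d N t :: real
  assumes d: "0 < d" and shift: "\<And>s. s \<in> S \<Longrightarrow> s - d \<in> S" and t: "t \<in> S"
  shows "\<exists>s\<in>S. s < N"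
proof -
  have iter: "t - real n * d \<in> S" for n
  proof (induction n)
    case 0 then show ?case using t by simp
  next
    case (Suc n)
    then show ?case using shift[OF Suc] by (simp add: algebra_simps)
  qed
  obtain n where "t - N < real n * d" using reals_Archimedean3[OF d] by blast
  then show ?thesis using iter[of n] by (intro bexI[of _ "t - real n * d"]) auto
qed

lemma continuous_attains_global_min:
  fixes w :: "real \<Rightarrow> real"
  assumes cont: "continuous_on UNIV w" and lim: "(w \<longlongrightarrow> 0) at_top"
    and neg: "w t0 < 0" and nonneg: "\<And>t. t \<le> T0 \<Longrightarrow> 0 \<le> w t"
  obtains s where "T0 \<le> s" and "\<And>y. w s \<le> w y"
proof -
  obtain R where R: "\<And>t. R \<le> t \<Longrightarrow> w t0 < w t"
    using order_tendstoD(1)[OF lim neg] by (auto simp: eventually_at_top_linorder)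
  define K where "K = {T0..max R t0}"
  have t0K: "t0 \<in> K" using nonneg[of t0] neg by (force simp: K_def)
  obtain s where sK: "s \<in> K" and smin: "\<And>y. y \<in> K \<Longrightarrow> w s \<le> w y"
    using continuous_attains_inf[OF compact_Icc, of T0 "max R t0" w] continuous_on_subset[OF cont] t0K
    unfolding K_def by blast
  have "w s \<le> w y" for y
  proof (cases "y \<in> K")
    case False
    then have "w t0 \<le> w y" using nonneg[of y] neg R[of y] by (force simp: K_def)
    then show ?thesis using smin[OF t0K] by simp
  qed (rule smin)
  moreover have "T0 \<le> s" using sK by (simp add: K_def)
  ultimately show ?thesis using that by blast
qed

(* A strict inequality phi t < psi (t + a) on a compact window survives small
   perturbations of the shift a (uniform continuity of psi on a compact set). *)
lemma shift_margin:
  fixes \<phi> \<psi> :: "real \<Rightarrow> real"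
  assumes cont: "continuous_on UNIV \<psi>" "continuous_on UNIV \<phi>"
    and gap: "\<And>t. t \<in> {T..T'} \<Longrightarrow> \<phi> t < \<psi> (t + a)"
  obtains \<delta> where "0 < \<delta>" and "\<And>b t. \<bar>b - a\<bar> < \<delta> \<Longrightarrow> t \<in> {T..T'} \<Longrightarrow> \<phi> t < \<psi> (t + b)"
proof (cases "T \<le> T'")
  case False
  then show ?thesis using that[of 1] by simp
next
  case True
  have gap_cont: "continuous_on {T..T'} (\<lambda>t. \<psi> (t + a) - \<phi> t)"
    by (intro continuous_intros continuous_on_compose2[OF cont(1)] continuous_on_subset[OF cont(2)]) auto
  have "\<exists>tm\<in>{T..T'}. \<forall>t\<in>{T..T'}. \<psi> (tm + a) - \<phi> tm \<le> \<psi> (t + a) - \<phi> t"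
    by (rule continuous_attains_inf[OF compact_Icc _ gap_cont]) (use True in auto)
  then obtain tm where tm: "tm \<in> {T..T'}" and tmin: "\<And>t. t \<in> {T..T'} \<Longrightarrow> \<psi> (tm + a) - \<phi> tm \<le> \<psi> (t + a) - \<phi> t"
    by blast
  define m where "m = \<psi> (tm + a) - \<phi> tm"
  have m: "0 < m" using gap[OF tm] by (simp add: m_def)
  have "uniformly_continuous_on {T + a - 1..T' + a + 1} \<psi>"
    using compact_uniformly_continuous continuous_on_subset[OF cont(1)] by blast
  then obtain \<delta>0 where \<delta>0: "0 < \<delta>0" and uc: "\<And>x y. x \<in> {T + a - 1..T' + a + 1} \<Longrightarrow>
      y \<in> {T + a - 1..T' + a + 1} \<Longrightarrow> dist y x < \<delta>0 \<Longrightarrow> dist (\<psi> y) (\<psi> x) < m"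
    unfolding uniformly_continuous_on_def using m by metis
  show ?thesis
  proof (rule that[of "min 1 \<delta>0"])
    fix b t assume b: "\<bar>b - a\<bar> < min 1 \<delta>0" and t: "t \<in> {T..T'}"
    have "a - 1 < b" "b < a + 1" and close: "dist (t + b) (t + a) < \<delta>0"
      using b by (auto simp: dist_real_def abs_less_iff)
    then have "t + a \<in> {T + a - 1..T' + a + 1}" and "t + b \<in> {T + a - 1..T' + a + 1}"
      using t by auto
    then have "dist (\<psi> (t + b)) (\<psi> (t + a)) < m"
      using close by (rule uc)
    then have "\<psi> (t + a) - \<psi> (t + b) < m"
      unfolding dist_real_def by linarith
    moreover have "m \<le> \<psi> (t + a) - \<phi> t" using tmin[OF t] by (simp add: m_def)
    ultimately show "\<phi> t < \<psi> (t + b)" by linarith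
  qed (use \<delta>0 in simp)
qed

lemma hypH_le_iff:
  assumes "hypH g \<kappa>" and "0 \<le> x" and "0 \<le> y"
  shows "g x \<le> g y \<longleftrightarrow> x \<le> y"
  using assms strict_mono_on_less_eq[of "{0..}" g x y] unfolding hypH_def by auto

lemma hypH_kappa:
  assumes "hypH g \<kappa>"
  shows "0 < \<kappa>" and "g \<kappa> = \<kappa>"
proof -
  have "{x. x \<ge> 0 \<and> g x = x} = {0, \<kappa>}" and "0 < \<kappa>"
    using assms unfolding hypH_def by auto
  then show "0 < \<kappa>" and "g \<kappa> = \<kappa>" by auto
qed

(* Since g'(kappa) < 1 and g' is continuous near kappa, g is a contraction with
   some constant L < 1 on a left neighbourhood [kappa - e, kappa]; this is the
   monostability of kappa that drives the comparison near +infinity. *)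
lemma hypH_contraction_below_kappa:
  assumes "hypH g \<kappa>"
  obtains e L where "0 < e" and "0 \<le> L" and "L < 1"
    and "\<And>x y. \<kappa> - e \<le> y \<Longrightarrow> y \<le> x \<Longrightarrow> x \<le> \<kappa> \<Longrightarrow> g x - g y \<le> L * (x - y)"
proof -
  obtain gk where gk: "(g has_real_derivative gk) (at \<kappa>)" and gk1: "gk < 1"
    using assms unfolding hypH_def by blast
  obtain \<epsilon> g' where \<epsilon>: "0 < \<epsilon>" and g': "\<And>x. x \<in> ball \<kappa> \<epsilon> \<Longrightarrow> (g has_real_derivative g' x) (at x)"
    and g'_cont: "continuous_on (ball \<kappa> \<epsilon>) g'"
    using assms unfolding hypH_def by blast
  have "g' \<kappa> = gk" using DERIV_unique[OF g' gk] \<epsilon> by simp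
  moreover have "isCont g' \<kappa>"
    using g'_cont \<epsilon> continuous_on_eq_continuous_at[of "ball \<kappa> \<epsilon>" g'] by auto
  ultimately have "(g' \<longlongrightarrow> gk) (at \<kappa>)" by (simp add: isCont_def)
  then have "\<forall>\<^sub>F x in at \<kappa>. g' x < (1 + gk) / 2"
    using gk1 by (intro order_tendstoD(2)) auto
  then obtain d where d: "0 < d" and g'_small: "\<And>x. x \<noteq> \<kappa> \<Longrightarrow> dist x \<kappa> < d \<Longrightarrow> g' x < (1 + gk) / 2"
    by (auto simp: eventually_at)
  define L where "L = max 0 ((1 + gk) / 2)"
  define e where "e = min d \<epsilon> / 2"
  have g'_bound: "(g has_real_derivative g' t) (at t) \<and> g' t \<le> L" if "\<kappa> - e \<le> t" "t \<le> \<kappa>" for t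
  proof -
    have near: "dist t \<kappa> < d" "t \<in> ball \<kappa> \<epsilon>"
      using that d \<epsilon> by (auto simp: e_def dist_real_def)
    have "g' t \<le> (1 + gk) / 2"
      using g'_small[OF _ near(1)] \<open>g' \<kappa> = gk\<close> gk1 by (cases "t = \<kappa>") auto
    then show ?thesis using g'[OF near(2)] by (simp add: L_def le_max_iff_disj)
  qed
  have "g x - g y \<le> L * (x - y)" if "\<kappa> - e \<le> y" "y \<le> x" "x \<le> \<kappa>" for x y
  proof -
    have "L * y - g y \<le> L * x - g x"
    proof (rule DERIV_nonneg_imp_nondecreasing[OF \<open>y \<le> x\<close>])
      fix t assume "y \<le> t" "t \<le> x"
      then have "(g has_real_derivative g' t) (at t)" "g' t \<le> L"
        using g'_bound[of t] that by auto
      then show "\<exists>D. ((\<lambda>t. L * t - g t) has_real_derivative D) (at t) \<and> 0 \<le> D"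
        by (intro exI[of _ "L - g' t"]) (auto intro!: derivative_eq_intros)
    qed
    then show ?thesis by (simp add: algebra_simps)
  qed
  moreover have "0 < e" "0 \<le> L" "L < 1" using d \<epsilon> gk1 by (auto simp: e_def L_def)
  ultimately show ?thesis using that by blast
qed

lemma wavefrontE:
  assumes "wavefront g \<kappa> h c \<phi>"
  obtains \<phi>' \<phi>'' where "\<And>s. (\<phi> has_real_derivative \<phi>' s) (at s)"
    and "\<And>s. (\<phi>' has_real_derivative \<phi>'' s) (at s)"
    and "\<And>s. \<phi>'' s = c * \<phi>' s + \<phi> s - g (\<phi> (s - c * h))"
proof -
  from assms obtain \<phi>' \<phi>'' where "\<forall>s. (\<phi> has_real_derivative \<phi>' s) (at s)"
    and "\<forall>s. (\<phi>' has_real_derivative \<phi>'' s) (at s)"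
    and ode: "\<forall>s. \<phi>'' s - c * \<phi>' s - \<phi> s + g (\<phi> (s - c * h)) = 0"
    unfolding wavefront_def by blast
  moreover have "\<phi>'' s = c * \<phi>' s + \<phi> s - g (\<phi> (s - c * h))" for s
    using ode by (simp add: algebra_simps)
  ultimately show ?thesis using that by blast
qed

lemma wavefront_continuous:
  assumes "wavefront g \<kappa> h c \<phi>"
  shows "continuous_on S \<phi>"
  using assms by (elim wavefrontE) (meson DERIV_isCont continuous_at_imp_continuous_on)

lemma wavefront_mono:
  assumes "wavefront g \<kappa> h c \<phi>" and "x \<le> y"
  shows "\<phi> x \<le> \<phi> y"
  using assms unfolding wavefront_def mono_def by blast

lemma wavefront_pos:
  assumes "wavefront g \<kappa> h c \<phi>"
  shows "0 < \<phi> t"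
  using assms unfolding wavefront_def by blast

(* A nondecreasing profile with limit kappa stays below kappa ... *)
lemma wavefront_le_kappa:
  assumes "wavefront g \<kappa> h c \<phi>"
  shows "\<phi> t \<le> \<kappa>"
proof -
  have "(\<phi> \<longlongrightarrow> \<kappa>) at_top" using assms unfolding wavefront_def by blast
  moreover have "\<forall>\<^sub>F s in at_top. \<phi> t \<le> \<phi> s"
    using eventually_ge_at_top[of t] by eventually_elim (rule wavefront_mono[OF assms])
  ultimately show ?thesis by (rule tendsto_lowerbound) simp
qed

(* ... and in fact strictly: at a point where phi = kappa, phi has a global
   maximum, so the equation forces g(phi(s - c h)) >= kappa, i.e. phi = kappa at
   s - c h as well; iterating contradicts phi(-infinity) = 0. *)
lemma wavefront_less_kappa:
  assumes H: "hypH g \<kappa>" and ch: "0 < c * h" and wf: "wavefront g \<kappa> h c \<phi>"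
  shows "\<phi> t < \<kappa>"
proof (rule ccontr)
  obtain \<phi>' \<phi>'' where deriv1: "\<And>s. (\<phi> has_real_derivative \<phi>' s) (at s)"
    and deriv2: "\<And>s. (\<phi>' has_real_derivative \<phi>'' s) (at s)"
    and ode: "\<And>s. \<phi>'' s = c * \<phi>' s + \<phi> s - g (\<phi> (s - c * h))"
    using wavefrontE[OF wf] by blast
  define S where "S = {s. \<phi> s = \<kappa>}"
  have shift_back: "s - c * h \<in> S" if "s \<in> S" for s
  proof -
    have global_max: "- \<phi> s \<le> - \<phi> y" for y
      using that wavefront_le_kappa[OF wf, of y] by (simp add: S_def)
    have "\<phi>' s = 0" "\<phi>'' s \<le> 0"
      using second_order_min[OF DERIV_minus[OF deriv1] DERIV_minus[OF deriv2] global_max] by auto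
    then have "g \<kappa> \<le> g (\<phi> (s - c * h))"
      using ode[of s] that hypH_kappa[OF H] by (simp add: S_def)
    then have "\<kappa> \<le> \<phi> (s - c * h)"
      using hypH_le_iff[OF H] hypH_kappa(1)[OF H] wavefront_pos[OF wf] by (simp add: less_imp_le)
    then show ?thesis
      using wavefront_le_kappa[OF wf] by (simp add: S_def antisym)
  qed
  assume "\<not> \<phi> t < \<kappa>"
  then have "t \<in> S" using wavefront_le_kappa[OF wf, of t] by (simp add: S_def)
  have "(\<phi> \<longlongrightarrow> 0) at_bot" using wf unfolding wavefront_def by blast
  then obtain N where N: "\<And>s. s \<le> N \<Longrightarrow> \<phi> s < \<kappa>"
    using order_tendstoD(2)[of \<phi> 0 at_bot \<kappa>] hypH_kappa(1)[OF H]
    by (auto simp: eventually_at_bot_linorder)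
  obtain s where "s \<in> S" "s < N"
    using shift_invariant_set_unbounded_below[OF ch shift_back \<open>t \<in> S\<close>] by blast
  then show False using N[of s] by (simp add: S_def)
qed

(* The basic maximum-principle estimate: if w(t) = psi(t + a) - phi(t) attains its
   global minimum at s, then w'(s) = 0 and w''(s) >= 0, and subtracting the two
   profile equations gives  g(psi(s - c h + a)) - g(phi(s - c h)) <= w(s). *)
lemma shifted_difference_at_min:
  assumes wf_\<phi>: "wavefront g \<kappa> h c \<phi>" and wf_\<psi>: "wavefront g \<kappa> h c \<psi>"
    and min: "\<And>y. \<psi> (s + a) - \<phi> s \<le> \<psi> (y + a) - \<phi> y"
  shows "g (\<psi> (s - c * h + a)) - g (\<phi> (s - c * h)) \<le> \<psi> (s + a) - \<phi> s"
proof -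
  obtain \<phi>' \<phi>'' where \<phi>1: "\<And>s. (\<phi> has_real_derivative \<phi>' s) (at s)"
    and \<phi>2: "\<And>s. (\<phi>' has_real_derivative \<phi>'' s) (at s)"
    and \<phi>_ode: "\<And>s. \<phi>'' s = c * \<phi>' s + \<phi> s - g (\<phi> (s - c * h))"
    using wavefrontE[OF wf_\<phi>] by blast
  obtain \<psi>' \<psi>'' where \<psi>1: "\<And>s. (\<psi> has_real_derivative \<psi>' s) (at s)"
    and \<psi>2: "\<And>s. (\<psi>' has_real_derivative \<psi>'' s) (at s)"
    and \<psi>_ode: "\<And>s. \<psi>'' s = c * \<psi>' s + \<psi> s - g (\<psi> (s - c * h))"
    using wavefrontE[OF wf_\<psi>] by blast
  have shift: "((\<lambda>t. f (t + a)) has_real_derivative f' (t + a)) (at t)"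
    if "\<And>s. (f has_real_derivative f' s) (at s)" for f f' :: "real \<Rightarrow> real" and t
    using that[of "t + a"] by (simp add: DERIV_shift)
  have "\<psi>' (s + a) - \<phi>' s = 0" and "0 \<le> \<psi>'' (s + a) - \<phi>'' s"
    using second_order_min[OF DERIV_diff[OF shift[OF \<psi>1] \<phi>1] DERIV_diff[OF shift[OF \<psi>2] \<phi>2] min]
    by auto
  then show ?thesis
    using \<phi>_ode[of s] \<psi>_ode[of "s + a"] by (simp add: algebra_simps)
qed

locale wavefront_pair =
  fixes g :: "real \<Rightarrow> real" and \<kappa> h c :: real and \<phi> \<psi> :: "real \<Rightarrow> real"
  assumes H: "hypH g \<kappa>" and delay_pos: "0 < c * h"
    and wf_\<phi>: "wavefront g \<kappa> h c \<phi>" and wf_\<psi>: "wavefront g \<kappa> h c \<psi>"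
begin

(* Comparison near +infinity: there is T0 such that for every shift a >= 0,
   phi <= psi(. + a) on (-infinity, T0] already implies it on all of R.  At a
   negative global minimum s0 of w beyond T0 the delayed arguments lie in the
   region where g contracts, so  -w(s0) <= g x - g y <= L (x - y) <= L (-w(s0)),
   which is impossible for L < 1. *)
lemma comparison_from_left:
  obtains T0 where "\<And>a t. 0 \<le> a \<Longrightarrow> \<forall>s\<le>T0. \<phi> s \<le> \<psi> (s + a) \<Longrightarrow> \<phi> t \<le> \<psi> (t + a)"
proof -
  obtain e L where e: "0 < e" and L: "0 \<le> L" "L < 1"
    and contraction: "\<And>x y. \<kappa> - e \<le> y \<Longrightarrow> y \<le> x \<Longrightarrow> x \<le> \<kappa> \<Longrightarrow> g x - g y \<le> L * (x - y)"
    using hypH_contraction_below_kappa[OF H] by blast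
  have \<psi>_lim: "(\<psi> \<longlongrightarrow> \<kappa>) at_top" and \<phi>_lim: "(\<phi> \<longlongrightarrow> \<kappa>) at_top"
    using wf_\<phi> wf_\<psi> unfolding wavefront_def by blast+
  obtain R where R: "\<And>t. R \<le> t \<Longrightarrow> \<kappa> - e < \<psi> t"
    using order_tendstoD(1)[OF \<psi>_lim, of "\<kappa> - e"] e by (auto simp: eventually_at_top_linorder)
  have "\<phi> t \<le> \<psi> (t + a)" if a: "0 \<le> a" and left: "\<forall>s\<le>R + c * h. \<phi> s \<le> \<psi> (s + a)" for a t
  proof (rule ccontr)
    define w where "w = (\<lambda>s. \<psi> (s + a) - \<phi> s)"
    assume "\<not> \<phi> t \<le> \<psi> (t + a)"
    then have neg_t: "w t < 0" by (simp add: w_def)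
    have cont: "continuous_on UNIV w"
      unfolding w_def using wavefront_continuous[OF wf_\<phi>]
      by (intro continuous_intros continuous_on_compose2[OF wavefront_continuous[OF wf_\<psi>]]) auto
    have "filterlim (\<lambda>s. a + s) at_top at_top"
      by (rule filterlim_tendsto_add_at_top[OF tendsto_const filterlim_ident])
    from filterlim_compose[OF \<psi>_lim this] have "((\<lambda>s. \<psi> (s + a)) \<longlongrightarrow> \<kappa>) at_top"
      by (simp add: add.commute)
    from tendsto_diff[OF this \<phi>_lim] have lim: "(w \<longlongrightarrow> 0) at_top"
      by (simp add: w_def)
    have nonneg: "0 \<le> w s" if "s \<le> R + c * h" for s using left that by (simp add: w_def)
    obtain s0 where s0: "R + c * h \<le> s0" and min: "\<And>y. w s0 \<le> w y"
      using continuous_attains_global_min[OF cont lim neg_t nonneg] by blast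
    have neg: "w s0 < 0" using min[of t] neg_t by simp
    define x y where "x = \<phi> (s0 - c * h)" and "y = \<psi> (s0 - c * h + a)"
    have key: "g y - g x \<le> w s0"
      using shifted_difference_at_min[OF wf_\<phi> wf_\<psi>, of s0 a] min
      by (simp add: w_def x_def y_def)
    have pos: "0 \<le> x" "0 \<le> y"
      using wavefront_pos[OF wf_\<phi>] wavefront_pos[OF wf_\<psi>] by (simp_all add: x_def y_def less_imp_le)
    have "y < x" using key neg hypH_le_iff[OF H pos(1) pos(2)] by linarith
    moreover have "\<kappa> - e \<le> y"
      using R[of "s0 - c * h"] s0 wavefront_mono[OF wf_\<psi>, of "s0 - c * h" "s0 - c * h + a"] a
      by (simp add: y_def)
    moreover have "x \<le> \<kappa>" using wavefront_le_kappa[OF wf_\<phi>] by (simp add: x_def)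
    ultimately have "g x - g y \<le> L * (x - y)" by (intro contraction) auto
    also have "x - y = - w (s0 - c * h)" by (simp add: w_def x_def y_def)
    also have "L * - w (s0 - c * h) \<le> L * - w s0" using min L(1) by (simp add: mult_left_mono)
    also have "\<dots> < - w s0" using L(2) neg by simp
    finally show False using key by simp
  qed
  then show ?thesis using that by blast
qed

definition admissible_shifts :: "real set" where
  "admissible_shifts = {a. 0 \<le> a \<and> (\<forall>t. \<phi> t \<le> \<psi> (t + a))}"

lemma shifted_continuous: "continuous_on UNIV (\<lambda>a. \<psi> (t + a))"
  by (intro continuous_intros continuous_on_compose2[OF wavefront_continuous[OF wf_\<psi>]]) auto

lemma admissible_shifts_closed: "closed admissible_shifts"
proof -
  have "admissible_shifts = {0..} \<inter> (\<Inter>t. {a. \<phi> t \<le> \<psi> (t + a)})"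
    by (auto simp: admissible_shifts_def)
  moreover have "closed {a. \<phi> t \<le> \<psi> (t + a)}" for t
    by (rule closed_Collect_le[OF continuous_on_const shifted_continuous])
  ultimately show ?thesis by (simp add: closed_Int closed_INT closed_atLeast)
qed

end

locale ordered_wavefront_pair = wavefront_pair +
  fixes T :: real
  assumes ordered_left: "\<And>t. t < T \<Longrightarrow> \<phi> t < \<psi> t"
begin

(* At a touching point z,
   w has a global minimum 0, so g(y) <= g(x) with x <= y, forcing x = y, i.e. z - c h
   is again a touching point; iterating reaches (-infinity, T), where phi < psi. *)
lemma strict_comparison:
  assumes a: "0 \<le> a" and le: "\<And>t. \<phi> t \<le> \<psi> (t + a)"
  shows "\<phi> t < \<psi> (t + a)"
proof (rule ccontr)
  define Z where "Z = {s. \<phi> s = \<psi> (s + a)}"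
  have shift_back: "z - c * h \<in> Z" if "z \<in> Z" for z
  proof -
    define x y where "x = \<phi> (z - c * h)" and "y = \<psi> (z - c * h + a)"
    have "\<psi> (z + a) - \<phi> z \<le> \<psi> (s + a) - \<phi> s" for s
      using that le[of s] by (simp add: Z_def)
    then have "g y - g x \<le> \<psi> (z + a) - \<phi> z"
      unfolding x_def y_def by (rule shifted_difference_at_min[OF wf_\<phi> wf_\<psi>])
    then have "g y \<le> g x" using that by (simp add: Z_def)
    moreover have "x \<le> y" using le[of "z - c * h"] by (simp add: x_def y_def)
    moreover have "0 \<le> x" "0 \<le> y"
      using wavefront_pos[OF wf_\<phi>] wavefront_pos[OF wf_\<psi>] by (simp_all add: x_def y_def less_imp_le)
    ultimately have "x = y" using hypH_le_iff[OF H] by (meson antisym)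
    then show ?thesis by (simp add: Z_def x_def y_def)
  qed
  assume "\<not> \<phi> t < \<psi> (t + a)"
  then have "t \<in> Z" using le[of t] by (simp add: Z_def)
  then obtain z where "z \<in> Z" "z < T"
    using shift_invariant_set_unbounded_below[OF delay_pos shift_back] by blast
  then have "\<psi> (z + a) < \<psi> (z + a)"
    using ordered_left[of z] wavefront_mono[OF wf_\<psi>, of z "z + a"] a by (simp add: Z_def)
  then show False by simp
qed

(* Combining comparison_from_left with the hypothesis on (-infinity, T): to check
   that a shift a >= 0 is admissible it suffices to check a compact window [T, T']. *)
lemma admissible_from_window:
  obtains T' where "T \<le> T'"
    and "\<And>a. 0 \<le> a \<Longrightarrow> (\<And>t. t \<in> {T..T'} \<Longrightarrow> \<phi> t \<le> \<psi> (t + a)) \<Longrightarrow> a \<in> admissible_shifts"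
proof -
  obtain T0 where T0: "\<And>a t. 0 \<le> a \<Longrightarrow> \<forall>s\<le>T0. \<phi> s \<le> \<psi> (s + a) \<Longrightarrow> \<phi> t \<le> \<psi> (t + a)"
    using comparison_from_left by blast
  have "a \<in> admissible_shifts"
    if a: "0 \<le> a" and window: "\<And>t. t \<in> {T..max T T0} \<Longrightarrow> \<phi> t \<le> \<psi> (t + a)" for a
  proof -
    have "\<phi> s \<le> \<psi> (s + a)" if "s \<le> T0" for s
    proof (cases "s < T")
      case True
      then show ?thesis
        using ordered_left[of s] wavefront_mono[OF wf_\<psi>, of s "s + a"] a by simp
    qed (use window that in auto)
    then show ?thesis using T0 a by (auto simp: admissible_shifts_def)
  qed
  then show ?thesis using that[of "max T T0"] by simp
qed

(* Large shifts are admissible: phi(T') < kappa and psi(s) -> kappa. *)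
lemma admissible_shifts_nonempty: "admissible_shifts \<noteq> {}"
proof -
  obtain T' where "T \<le> T'"
    and window: "\<And>a. 0 \<le> a \<Longrightarrow> (\<And>t. t \<in> {T..T'} \<Longrightarrow> \<phi> t \<le> \<psi> (t + a)) \<Longrightarrow> a \<in> admissible_shifts"
    using admissible_from_window by blast
  have "(\<psi> \<longlongrightarrow> \<kappa>) at_top" using wf_\<psi> unfolding wavefront_def by blast
  then obtain R where R: "\<And>s. R \<le> s \<Longrightarrow> \<phi> T' < \<psi> s"
    using order_tendstoD(1)[of \<psi> \<kappa> at_top "\<phi> T'"] wavefront_less_kappa[OF H delay_pos wf_\<phi>]
    by (auto simp: eventually_at_top_linorder)
  define a where "a = max 0 (R - T)"
  have "\<phi> t \<le> \<psi> (t + a)" if "t \<in> {T..T'}" for t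
  proof -
    have "\<phi> t \<le> \<phi> T'" using that wavefront_mono[OF wf_\<phi>] by simp
    also have "\<dots> < \<psi> (T + a)" using R by (simp add: a_def)
    also have "\<dots> \<le> \<psi> (t + a)" using that wavefront_mono[OF wf_\<psi>] by simp
    finally show ?thesis by simp
  qed
  then have "a \<in> admissible_shifts" using window by (simp add: a_def)
  then show ?thesis by blast
qed

(* A positive admissible shift can be decreased: by strict comparison the
   inequality on the window is strict, and shift_margin keeps it for nearby shifts. *)
lemma admissible_shifts_decrease:
  assumes "a \<in> admissible_shifts" and "0 < a"
  obtains b where "b \<in> admissible_shifts" and "b < a"
proof -
  obtain T' where window: "\<And>a. 0 \<le> a \<Longrightarrow> (\<And>t. t \<in> {T..T'} \<Longrightarrow> \<phi> t \<le> \<psi> (t + a)) \<Longrightarrow> a \<in> admissible_shifts"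
    using admissible_from_window by blast
  have "\<phi> t < \<psi> (t + a)" for t
    using strict_comparison assms by (simp add: admissible_shifts_def)
  then obtain \<delta> where \<delta>: "0 < \<delta>"
    and margin: "\<And>b t. \<bar>b - a\<bar> < \<delta> \<Longrightarrow> t \<in> {T..T'} \<Longrightarrow> \<phi> t < \<psi> (t + b)"
    using shift_margin[OF wavefront_continuous[OF wf_\<psi>] wavefront_continuous[OF wf_\<phi>]] by metis
  define b where "b = max 0 (a - \<delta> / 2)"
  have "\<bar>b - a\<bar> < \<delta>" "b < a" "0 \<le> b" using \<delta> \<open>0 < a\<close> by (auto simp: b_def)
  then have "b \<in> admissible_shifts" using window margin by (simp add: less_imp_le)
  then show ?thesis using that \<open>b < a\<close> by blast
qed

(* The infimum of the admissible shifts is admissible (closedness) and cannot be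
   positive (admissible_shifts_decrease), hence 0 is admissible: phi <= psi. *)
lemma zero_admissible: "0 \<in> admissible_shifts"
proof -
  have bdd: "bdd_below admissible_shifts"
    by (auto simp: admissible_shifts_def bdd_below_def)
  have inf_mem: "Inf admissible_shifts \<in> admissible_shifts"
    using closed_contains_Inf[OF admissible_shifts_nonempty bdd admissible_shifts_closed] .
  show ?thesis
  proof (cases "Inf admissible_shifts = 0")
    case False
    then have "0 < Inf admissible_shifts" using inf_mem by (simp add: admissible_shifts_def)
    then obtain b where "b \<in> admissible_shifts" "b < Inf admissible_shifts"
      using admissible_shifts_decrease[OF inf_mem] by blast
    then show ?thesis using cInf_lower[OF _ bdd] by fastforce
  qed (use inf_mem in simp)
qed

end

theorem mainTheorem4:
  fixes g \<phi> \<psi> :: "real \<Rightarrow> real" and \<kappa> h c T :: real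
  assumes "h > 0" and "hypH g \<kappa>" and "c > 0"
    and "wavefront g \<kappa> h c \<phi>" and "wavefront g \<kappa> h c \<psi>"
    and "\<forall>t<T. \<phi> t < \<psi> t"
  shows "\<forall>t. \<phi> t < \<psi> t"
proof -
  interpret ordered_wavefront_pair g \<kappa> h c \<phi> \<psi> T
    using assms by unfold_locales auto
  have "\<phi> t \<le> \<psi> (t + 0)" for t
    using zero_admissible by (simp add: admissible_shifts_def)
  then show ?thesis using strict_comparison[of 0] by simp
qed

end
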